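(* Let $G$ and $H$ be finite simple graphs. If the strong product $G \boxtimes H$ is well-dominated, then $G$ and $H$ are both well-dominated.
   Context: A set $D$ of vertices of a graph is dominating if every vertex is in $D$ or adjacent to a vertex of $D$. A graph is well-dominated if every minimal (with respect to inclusion) dominating set is a minimum dominating set, i.e. $\gamma=\Gamma$ (smallest and largest size of a minimal dominating set). The strong product $G\boxtimes H$ has vertex set $V(G)\times V(H)$, with distinct $(g_1,h_1)$ and $(g_2,h_2)$ adjacent iff ($g_1=g_2$ and $h_1h_2\in E(H)$), or ($h_1=h_2$ and $g_1g_2\in E(G)$), or ($g_1g_2\in E(G)$ and $h_1h_2\in E(H)$). *)

theory Defs
  imports Main
begin

definition fin_simple_graph :: "'a set \<Rightarrow> ('a \<Rightarrow> 'a \<Rightarrow> bool) \<Rightarrow> bool" where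
  "fin_simple_graph V E \<longleftrightarrow> finite V \<and> (\<forall>x y. E x y \<longrightarrow> x \<in> V \<and> y \<in> V)
     \<and> (\<forall>x y. E x y \<longrightarrow> E y x) \<and> (\<forall>x. \<not> E x x)"

definition dominating :: "'a set \<Rightarrow> ('a \<Rightarrow> 'a \<Rightarrow> bool) \<Rightarrow> 'a set \<Rightarrow> bool" where
  "dominating V E D \<longleftrightarrow> D \<subseteq> V \<and> (\<forall>v\<in>V. v \<in> D \<or> (\<exists>u\<in>D. E v u))"

definition minimal_dominating :: "'a set \<Rightarrow> ('a \<Rightarrow> 'a \<Rightarrow> bool) \<Rightarrow> 'a set \<Rightarrow> bool" where
  "minimal_dominating V E D \<longleftrightarrow> dominating V E D \<and> (\<forall>D'. D' \<subset> D \<longrightarrow> \<not> dominating V E D')"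

definition well_dominated :: "'a set \<Rightarrow> ('a \<Rightarrow> 'a \<Rightarrow> bool) \<Rightarrow> bool" where
  "well_dominated V E \<longleftrightarrow> (\<forall>D. minimal_dominating V E D \<longrightarrow>
      (\<forall>D'. dominating V E D' \<longrightarrow> card D \<le> card D'))"

definition strong_edge :: "('a \<Rightarrow> 'a \<Rightarrow> bool) \<Rightarrow> ('b \<Rightarrow> 'b \<Rightarrow> bool) \<Rightarrow> 'a \<times> 'b \<Rightarrow> 'a \<times> 'b \<Rightarrow> bool" where
  "strong_edge E1 E2 p q \<longleftrightarrow> p \<noteq> q \<and>
     ((fst p = fst q \<and> E2 (snd p) (snd q)) \<or>
      (snd p = snd q \<and> E1 (fst p) (fst q)) \<or>
      (E1 (fst p) (fst q) \<and> E2 (snd p) (snd q)))"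

end

theory Submission
  imports Defs
begin

text \<open>The closed neighbourhood of a vertex of the strong product is the product of the closed
  neighbourhoods of its coordinates. Hence a product of dominating sets dominates, and a vertex
  \<open>(x, y)\<close> built from private neighbours \<open>x\<close> of \<open>a \<in> A\<close> and \<open>y\<close> of \<open>b \<in> B\<close> is dominated by
  \<open>(a, b)\<close> alone, so \<open>A \<times> B\<close> is minimal whenever \<open>A\<close> and \<open>B\<close> are. If the product is
  well-dominated, comparing a minimal \<open>A \<times> B\<close> with a dominating \<open>A' \<times> B\<close>, where \<open>B\<close> is any
  fixed nonempty minimal dominating set, gives \<open>|A| |B| \<le> |A'| |B|\<close>, i.e. \<open>|A| \<le> |A'|\<close>.\<close>

lemma strong_edge_closed_iff:
  "p = q \<or> strong_edge E1 E2 p q \<longleftrightarrow>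
     (fst p = fst q \<or> E1 (fst p) (fst q)) \<and> (snd p = snd q \<or> E2 (snd p) (snd q))"
  by (cases p; cases q) (auto simp: strong_edge_def)

lemma dominating_iff_closed:
  "dominating V E D \<longleftrightarrow> D \<subseteq> V \<and> (\<forall>v\<in>V. \<exists>u\<in>D. v = u \<or> E v u)"
  unfolding dominating_def by blast

lemma dominating_Times:
  assumes "dominating V1 E1 A" and "dominating V2 E2 B"
  shows "dominating (V1 \<times> V2) (strong_edge E1 E2) (A \<times> B)"
  unfolding dominating_iff_closed
proof (intro conjI ballI)
  show "A \<times> B \<subseteq> V1 \<times> V2"
    using assms by (auto simp: dominating_def)
next
  fix p assume "p \<in> V1 \<times> V2"
  then have "fst p \<in> V1" "snd p \<in> V2"
    by auto
  then obtain a b where "a \<in> A" "fst p = a \<or> E1 (fst p) a" "b \<in> B" "snd p = b \<or> E2 (snd p) b"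
    using assms unfolding dominating_iff_closed by blast
  then show "\<exists>u\<in>A \<times> B. p = u \<or> strong_edge E1 E2 p u"
    by (intro bexI[of _ "(a, b)"]) (auto simp: strong_edge_closed_iff)
qed

lemma minimal_dominating_private_neighbour:
  assumes "minimal_dominating V E A" and "a \<in> A"
  obtains x where "x \<in> V" "x = a \<or> E x a" "\<And>u. u \<in> A \<Longrightarrow> x = u \<or> E x u \<Longrightarrow> u = a"
proof -
  have "A - {a} \<subset> A"
    using assms(2) by blast
  then have dom: "dominating V E A" and not_dom: "\<not> dominating V E (A - {a})"
    using assms(1) unfolding minimal_dominating_def by blast+
  then obtain x where x: "x \<in> V" "\<forall>u\<in>A - {a}. x \<noteq> u \<and> \<not> E x u"
    unfolding dominating_iff_closed by blast
  moreover obtain u where "u \<in> A" "x = u \<or> E x u"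
    using dom x(1) unfolding dominating_iff_closed by blast
  ultimately show thesis
    using that by blast
qed

lemma minimal_dominating_Times:
  assumes A: "minimal_dominating V1 E1 A" and B: "minimal_dominating V2 E2 B"
  shows "minimal_dominating (V1 \<times> V2) (strong_edge E1 E2) (A \<times> B)"
proof -
  have "\<not> dominating (V1 \<times> V2) (strong_edge E1 E2) D" if "D \<subset> A \<times> B" for D
  proof
    assume dom: "dominating (V1 \<times> V2) (strong_edge E1 E2) D"
    obtain a b where ab: "a \<in> A" "b \<in> B" "(a, b) \<notin> D"
      using \<open>D \<subset> A \<times> B\<close> by auto
    obtain x where x: "x \<in> V1" "x = a \<or> E1 x a" "\<And>u. u \<in> A \<Longrightarrow> x = u \<or> E1 x u \<Longrightarrow> u = a"
      using minimal_dominating_private_neighbour[OF A ab(1)] by blast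
    obtain y where y: "y \<in> V2" "y = b \<or> E2 y b" "\<And>u. u \<in> B \<Longrightarrow> y = u \<or> E2 y u \<Longrightarrow> u = b"
      using minimal_dominating_private_neighbour[OF B ab(2)] by blast
    have "(x, y) \<in> V1 \<times> V2"
      using x(1) y(1) by simp
    then obtain q where q: "q \<in> D" "(x, y) = q \<or> strong_edge E1 E2 (x, y) q"
      using dom unfolding dominating_iff_closed by blast
    have "fst q \<in> A" "snd q \<in> B"
      using q(1) \<open>D \<subset> A \<times> B\<close> by auto
    moreover have "(x = fst q \<or> E1 x (fst q)) \<and> (y = snd q \<or> E2 y (snd q))"
      using q(2) unfolding strong_edge_closed_iff by simp
    ultimately have "q = (a, b)"
      using x(3) y(3) by (simp add: prod_eq_iff)
    with q(1) ab(3) show False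
      by simp
  qed
  with dominating_Times[of V1 E1 A V2 E2 B] A B show ?thesis
    unfolding minimal_dominating_def by blast
qed

lemma ex_minimal_dominating:
  assumes "finite V" and "V \<noteq> {}"
  obtains D where "minimal_dominating V E D" and "card D > 0"
proof -
  obtain D where D: "dominating V E D" "\<And>C. dominating V E C \<Longrightarrow> card D \<le> card C"
    using ex_has_least_nat[of "dominating V E" V card] by (auto simp: dominating_def)
  have "finite D"
    using D(1) assms(1) finite_subset unfolding dominating_def by blast
  then have "minimal_dominating V E D"
    using D psubset_card_mono unfolding minimal_dominating_def by (blast dest: leD)
  moreover have "D \<noteq> {}"
    using D(1) assms(2) unfolding dominating_def by auto
  ultimately show thesis
    using that \<open>finite D\<close> by (simp add: card_gt_0_iff)
qed

lemma well_dominated_Times_card_le: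
  assumes "well_dominated (V1 \<times> V2) (strong_edge E1 E2)"
    and "minimal_dominating V1 E1 A" and "minimal_dominating V2 E2 B"
    and "dominating V1 E1 A'" and "dominating V2 E2 B'"
  shows "card A * card B \<le> card A' * card B'"
proof -
  have "card (A \<times> B) \<le> card (A' \<times> B')"
    using assms(1) minimal_dominating_Times[OF assms(2,3)] dominating_Times[OF assms(4,5)]
    unfolding well_dominated_def by blast
  then show ?thesis
    by (simp add: card_cartesian_product)
qed

theorem corollary7:
  fixes V1 :: "'a set" and E1 :: "'a \<Rightarrow> 'a \<Rightarrow> bool"
    and V2 :: "'b set" and E2 :: "'b \<Rightarrow> 'b \<Rightarrow> bool"
  assumes "fin_simple_graph V1 E1" and "fin_simple_graph V2 E2"
    and "V1 \<noteq> {}" and "V2 \<noteq> {}"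
    and "well_dominated (V1 \<times> V2) (strong_edge E1 E2)"
  shows "well_dominated V1 E1 \<and> well_dominated V2 E2"
proof -
  obtain A0 where A0: "minimal_dominating V1 E1 A0" "card A0 > 0"
    using ex_minimal_dominating assms(1,3) unfolding fin_simple_graph_def by blast
  obtain B0 where B0: "minimal_dominating V2 E2 B0" "card B0 > 0"
    using ex_minimal_dominating assms(2,4) unfolding fin_simple_graph_def by blast
  have "card A \<le> card A'" if "minimal_dominating V1 E1 A" "dominating V1 E1 A'" for A A'
    using well_dominated_Times_card_le[OF assms(5) that(1) B0(1) that(2), of B0] B0
    unfolding minimal_dominating_def by simp
  moreover have "card B \<le> card B'" if "minimal_dominating V2 E2 B" "dominating V2 E2 B'" for B B'
    using well_dominated_Times_card_le[OF assms(5) A0(1) that(1) _ that(2), of A0] A0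
    unfolding minimal_dominating_def by simp
  ultimately show ?thesis
    unfolding well_dominated_def by blast
qed

end
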